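(* Let $\mathcal{C}$ be a uniformly quasi-wide class of labelled graphs and let $\psi(x,y)$ be a first-order interpretation formula. Then for every $m\in\mathbb{N}$ there exists $p\in\mathbb{N}$ such that for every $H \in I_\psi(\mathcal{C})$, every independent set in the graph of the relation $\cong^{D,H}_m$ has size at most $p$.
   Context: All graphs are finite, simple, undirected and loopless; labelled graphs carry unary predicates $L_a$, $a\in Lab$, for a finite set $Lab$. $N(u)$ is the neighbourhood of $u$ and $D(u,v):=N(u)\,\Delta\,N(v)$. Differential game on a graph $H$ from tuples $\bar a=(a_1,\dots,a_k)$, $\bar b=(b_1,\dots,b_k)$: in each of $m$ rounds, with current tuples $(a_1,\dots,a_n),(b_1,\dots,b_n)$, Spoiler chooses an index $i\le n$ and a vertex $v\in D(a_i,b_i)$ and declares whether $v$ becomes $a_{n+1}$ or $b_{n+1}$ (if all $D(a_i,b_i)$ are empty, Duplicator wins); Duplicator answers with a vertex $w\in D(a_i,b_i)$ (same $i$) which becomes the other of $b_{n+1},a_{n+1}$. Duplicator wins at the end iff $a_i\mapsto b_i$ is a label-preserving isomorphism of the induced subgraphs (equalities, adjacencies and labels preserved). $u\cong^{D,H}_m v$ means Duplicator has a winning strategy in the $m$-round differential game on $H$ from $((u),(v))$. The graph of this relation has vertex set $V(H)$ and an edge between distinct $u,v$ iff $u\cong^{D,H}_m v$; an independent set in it is a set of vertices no two distinct of which are related. An interpretation formula is an FO formula $\psi(x,y)$ (over the vocabulary of labelled graphs) defining a symmetric irreflexive relation on every graph; $I_\psi(G)$ is the unlabelled graph on $V(G)$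 with edges $\{uv : G\models \psi(u,v)\}$, and $I_\psi(\mathcal{C})=\{I_\psi(G):G\in\mathcal{C}\}$. Uniformly quasi-wide: $\mathcal{C}$ is uniformly quasi-wide if for every $r\in\mathbb{N}$ there are a function $N:\mathbb{N}\to\mathbb{N}$ and a constant $s\in\mathbb{N}$ such that for every $k\in\mathbb{N}$, every $G\in\mathcal{C}$ and every $A\subseteq V(G)$ with $|A|\ge N(k)$ there is a set $S\subseteq V(G)$ with $|S|\le s$ such that $A\setminus S$ contains at least $k$ vertices with pairwise distance more than $r$ in $G\setminus S$. *)

theory Defs
  imports Main
begin

record ('v, 'l) lgraph =
  verts :: "'v set"
  adjs  :: "'v \<Rightarrow> 'v \<Rightarrow> bool"
  labs  :: "'l \<Rightarrow> 'v \<Rightarrow> bool"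

definition wf_lgraph :: "('v, 'l) lgraph \<Rightarrow> bool" where
  "wf_lgraph G \<longleftrightarrow> finite (verts G)
     \<and> (\<forall>u v. adjs G u v \<longrightarrow> u \<in> verts G \<and> v \<in> verts G)
     \<and> (\<forall>u v. adjs G u v \<longrightarrow> adjs G v u)
     \<and> (\<forall>u. \<not> adjs G u u)
     \<and> (\<forall>a u. labs G a u \<longrightarrow> u \<in> verts G)"

definition nbh :: "('v, 'l) lgraph \<Rightarrow> 'v \<Rightarrow> 'v set" where
  "nbh G u = {w \<in> verts G. adjs G u w}"

definition Dset :: "('v, 'l) lgraph \<Rightarrow> 'v \<Rightarrow> 'v \<Rightarrow> 'v set" where
  "Dset G u v = (nbh G u - nbh G v) \<union> (nbh G v - nbh G u)"

definition partial_iso :: "('v, 'l) lgraph \<Rightarrow> 'v list \<Rightarrow> 'v list \<Rightarrow> bool" where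
  "partial_iso G as bs \<longleftrightarrow> length as = length bs \<and>
     (\<forall>i < length as. \<forall>j < length as.
        (as ! i = as ! j \<longleftrightarrow> bs ! i = bs ! j) \<and>
        (adjs G (as ! i) (as ! j) \<longleftrightarrow> adjs G (bs ! i) (bs ! j))) \<and>
     (\<forall>i < length as. \<forall>a. labs G a (as ! i) \<longleftrightarrow> labs G a (bs ! i))"

text \<open>dgame G m as bs: Duplicator has a winning strategy in the m-round
differential game on G from the tuples as, bs (of equal length).\<close>

primrec dgame :: "('v, 'l) lgraph \<Rightarrow> nat \<Rightarrow> 'v list \<Rightarrow> 'v list \<Rightarrow> bool" where
  "dgame G 0 as bs = partial_iso G as bs"
| "dgame G (Suc m) as bs =
     ((\<forall>i < length as. Dset G (as ! i) (bs ! i) = {}) \<or>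
      (\<forall>i < length as. \<forall>v \<in> Dset G (as ! i) (bs ! i).
          (\<exists>w \<in> Dset G (as ! i) (bs ! i). dgame G m (as @ [v]) (bs @ [w])) \<and>
          (\<exists>w \<in> Dset G (as ! i) (bs ! i). dgame G m (as @ [w]) (bs @ [v]))))"

definition dcong :: "('v, 'l) lgraph \<Rightarrow> nat \<Rightarrow> 'v \<Rightarrow> 'v \<Rightarrow> bool" where
  "dcong H m u v \<longleftrightarrow> dgame H m [u] [v]"

definition dcong_indep :: "('v, 'l) lgraph \<Rightarrow> nat \<Rightarrow> 'v set \<Rightarrow> bool" where
  "dcong_indep H m I \<longleftrightarrow> I \<subseteq> verts H \<and>
     (\<forall>u \<in> I. \<forall>v \<in> I. u \<noteq> v \<longrightarrow> \<not> dcong H m u v)"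

datatype 'l fo =
    FEq nat nat
  | FAdj nat nat
  | FLab 'l nat
  | FNeg "'l fo"
  | FAnd "'l fo" "'l fo"
  | FEx nat "'l fo"

primrec sat :: "('v, 'l) lgraph \<Rightarrow> 'l fo \<Rightarrow> (nat \<Rightarrow> 'v) \<Rightarrow> bool" where
  "sat G (FEq x y) \<sigma> = (\<sigma> x = \<sigma> y)"
| "sat G (FAdj x y) \<sigma> = adjs G (\<sigma> x) (\<sigma> y)"
| "sat G (FLab a x) \<sigma> = labs G a (\<sigma> x)"
| "sat G (FNeg \<phi>) \<sigma> = (\<not> sat G \<phi> \<sigma>)"
| "sat G (FAnd \<phi> \<chi>) \<sigma> = (sat G \<phi> \<sigma> \<and> sat G \<chi> \<sigma>)"
| "sat G (FEx x \<phi>) \<sigma> = (\<exists>a \<in> verts G. sat G \<phi> (\<sigma>(x := a)))"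

primrec fvars :: "'l fo \<Rightarrow> nat set" where
  "fvars (FEq x y) = {x, y}"
| "fvars (FAdj x y) = {x, y}"
| "fvars (FLab a x) = {x}"
| "fvars (FNeg \<phi>) = fvars \<phi>"
| "fvars (FAnd \<phi> \<chi>) = fvars \<phi> \<union> fvars \<chi>"
| "fvars (FEx x \<phi>) = fvars \<phi> - {x}"

text \<open>Assignment x := u (variable 0), y := v (variable 1).\<close>
definition env2 :: "'v \<Rightarrow> 'v \<Rightarrow> nat \<Rightarrow> 'v" where
  "env2 u v = (\<lambda>i. if i = 0 then u else v)"

text \<open>Vertices are
natural numbers, so every finite graph is represented up to isomorphism.\<close>
definition interp_formula :: "'l fo \<Rightarrow> bool" where
  "interp_formula \<psi> \<longleftrightarrow> fvars \<psi> \<subseteq> {0, 1} \<and>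
     (\<forall>G :: (nat, 'l) lgraph. wf_lgraph G \<longrightarrow>
        (\<forall>u \<in> verts G. \<forall>v \<in> verts G.
           (sat G \<psi> (env2 u v) \<longleftrightarrow> sat G \<psi> (env2 v u)) \<and> \<not> sat G \<psi> (env2 u u)))"

definition interp :: "'l fo \<Rightarrow> ('v, 'l) lgraph \<Rightarrow> ('v, 'l) lgraph" where
  "interp \<psi> G = \<lparr> verts = verts G,
     adjs = (\<lambda>u v. u \<in> verts G \<and> v \<in> verts G \<and> sat G \<psi> (env2 u v)),
     labs = (\<lambda>_ _. False) \<rparr>"

text \<open>near G S r u v: there is a walk of length at most r from u to v in G - S
(all vertices after u avoid S; u itself is outside S wherever this is used).\<close>
primrec near :: "('v, 'l) lgraph \<Rightarrow> 'v set \<Rightarrow> nat \<Rightarrow> 'v \<Rightarrow> 'v \<Rightarrow> bool" where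
  "near G S 0 u v = (u = v)"
| "near G S (Suc r) u v =
     (near G S r u v \<or> (\<exists>w. near G S r u w \<and> w \<notin> S \<and> adjs G w v \<and> v \<notin> S))"

definition uniformly_quasi_wide :: "('v, 'l) lgraph set \<Rightarrow> bool" where
  "uniformly_quasi_wide C \<longleftrightarrow>
     (\<forall>r::nat. \<exists>N :: nat \<Rightarrow> nat. \<exists>s::nat. \<forall>k::nat. \<forall>G \<in> C. \<forall>A.
        A \<subseteq> verts G \<and> card A \<ge> N k \<longrightarrow>
        (\<exists>S. S \<subseteq> verts G \<and> card S \<le> s \<and>
           (\<exists>B. B \<subseteq> A - S \<and> finite B \<and> card B = k \<and>
              (\<forall>u \<in> B. \<forall>v \<in> B. u \<noteq> v \<longrightarrow> \<not> near G S r u v))))"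

end

theory Submission
  imports Defs
begin

text \<open>
Let q be the quantifier depth of psi and H = I_psi(G). Call an Ehrenfeucht-Fraisse game on G a
swapping game if answering a move x by y also counts as answering y by x, so that the partial
isomorphism built by Duplicator is an involution. If Duplicator wins the (q + m)-round swapping game
from u and v, then u and v are related in the m-round differential game on H: to a move
v' in D(a, b) she answers with the partner w' of v', and psi(a, v') = psi(b, w'),
psi(a, w') = psi(b, v') force w' into D(a, b).

Such a strategy exists whenever u and v lie far apart in G - S and have the same local type
relative to S, local types being given by a back-and-forth game whose moves must stay within
distance 2^j of the current tuple: moves near u are answered through the local equivalence near v
and vice versa, and all other moves are answered by themselves. For |S| <= s there are boundedly
many local types, independently of G. By uniform quasi-wideness with radius 2^(q+m+2), a large
independent set would therefore contain two far-apart vertices of the same local type, which are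
related, a contradiction.
\<close>

section \<open>Distances avoiding S\<close>

lemma near_mono: "near G S r a b \<Longrightarrow> r \<le> r' \<Longrightarrow> near G S r' a b"
proof (induction r')
  case 0
  then show ?case by simp
next
  case (Suc r')
  then show ?case by (cases "r = Suc r'") auto
qed

lemma near_refl: "near G S r a a"
  using near_mono[of G S 0 a a r] by simp

lemma near_trans: "near G S r a b \<Longrightarrow> near G S r' b c \<Longrightarrow> near G S (r + r') a c"
proof (induction r' arbitrary: c)
  case 0
  then show ?case by simp
next
  case (Suc r')
  from Suc.prems(2) show ?case
  proof (simp only: near.simps, elim disjE exE conjE)
    assume "near G S r' b c"
    then show ?thesis using Suc.IH Suc.prems(1) by simp
  next
    fix w assume "near G S r' b w" "w \<notin> S" "adjs G w c" "c \<notin> S"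
    then show ?thesis using Suc.IH[of w] Suc.prems(1) by auto
  qed
qed

lemma near_sym:
  assumes "wf_lgraph G" and "a \<notin> S" and "b \<notin> S"
  shows "near G S r a b \<Longrightarrow> near G S r b a"
  using \<open>b \<notin> S\<close>
proof (induction r arbitrary: b)
  case 0
  then show ?case by simp
next
  case (Suc r)
  show ?case
  proof (cases "near G S r a b")
    case True
    then show ?thesis using Suc.IH Suc.prems(2) by simp
  next
    case False
    then obtain w where w: "near G S r a w" "w \<notin> S" "adjs G w b"
      using Suc.prems(1) by auto
    have "adjs G b w"
      using w(3) assms(1) unfolding wf_lgraph_def by blast
    then have "near G S 1 b w"
      using w(2) Suc.prems(2) by auto
    from near_trans[OF this Suc.IH[OF w(1,2)]] show ?thesis by simp
  qed
qed

lemma not_near_distinct_nonadj: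
  assumes "\<not> near G S r a b" and "1 \<le> r" and "a \<notin> S" and "b \<notin> S"
  shows "a \<noteq> b \<and> \<not> adjs G a b"
proof -
  have "\<not> near G S 1 a b"
    using assms(1,2) near_mono[of G S 1 a b r] by blast
  then show ?thesis using assms(3,4) by auto
qed

section \<open>Local types relative to S\<close>

text \<open>Besides the atomic formulas, the type of a tuple records its adjacencies to the vertices of S;
this is what lets Duplicator answer moves inside S by themselves.\<close>

datatype ('v, 'l) atom = Same nat nat | Edge nat nat | Label 'l nat | Edge_to 'v nat

definition atomic_type :: "('v, 'l) lgraph \<Rightarrow> 'v set \<Rightarrow> 'v list \<Rightarrow> ('v, 'l) atom set" where
  "atomic_type G S cs =
     {Same i j |i j. i < length cs \<and> j < length cs \<and> cs ! i = cs ! j}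
     \<union> {Edge i j |i j. i < length cs \<and> j < length cs \<and> adjs G (cs ! i) (cs ! j)}
     \<union> {Label a i |a i. i < length cs \<and> labs G a (cs ! i)}
     \<union> {Edge_to s i |s i. s \<in> S \<and> i < length cs \<and> adjs G (cs ! i) s}"

lemma atomic_type_iff:
  "Same i j \<in> atomic_type G S cs \<longleftrightarrow> i < length cs \<and> j < length cs \<and> cs ! i = cs ! j"
  "Edge i j \<in> atomic_type G S cs \<longleftrightarrow> i < length cs \<and> j < length cs \<and> adjs G (cs ! i) (cs ! j)"
  "Label a i \<in> atomic_type G S cs \<longleftrightarrow> i < length cs \<and> labs G a (cs ! i)"
  "Edge_to s i \<in> atomic_type G S cs \<longleftrightarrow> s \<in> S \<and> i < length cs \<and> adjs G (cs ! i) s"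
  by (simp_all add: atomic_type_def)

lemma atomic_type_eq_length:
  assumes "atomic_type G S cs = atomic_type G S ds"
  shows "length cs = length ds"
proof -
  have "i < length cs \<longleftrightarrow> i < length ds" for i
    using arg_cong[OF assms, of "\<lambda>T. Same i i \<in> T"] by (simp add: atomic_type_iff)
  from this[of "length cs"] this[of "length ds"] show ?thesis by simp
qed

lemma atomic_type_eqD:
  assumes "atomic_type G S cs = atomic_type G S ds" and "i < length cs" and "j < length cs"
  shows "cs ! i = cs ! j \<longleftrightarrow> ds ! i = ds ! j"
    and "adjs G (cs ! i) (cs ! j) \<longleftrightarrow> adjs G (ds ! i) (ds ! j)"
    and "labs G a (cs ! i) \<longleftrightarrow> labs G a (ds ! i)"
    and "s \<in> S \<Longrightarrow> adjs G (cs ! i) s \<longleftrightarrow> adjs G (ds ! i) s"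
  using assms(2,3) atomic_type_eq_length[OF assms(1)]
    arg_cong[OF assms(1), of "\<lambda>T. Same i j \<in> T"] arg_cong[OF assms(1), of "\<lambda>T. Edge i j \<in> T"]
    arg_cong[OF assms(1), of "\<lambda>T. Label a i \<in> T"] arg_cong[OF assms(1), of "\<lambda>T. Edge_to s i \<in> T"]
  by (simp_all add: atomic_type_iff)

definition near_set :: "('v, 'l) lgraph \<Rightarrow> 'v set \<Rightarrow> nat \<Rightarrow> 'v list \<Rightarrow> 'v set" where
  "near_set G S r cs = {x \<in> verts G - S. \<exists>c \<in> set cs. near G S r c x}"

text \<open>In round k + 1 moves are restricted to near_set G S (2 ^ k); halving the radius from round to
round keeps a k-round play within distance 2 ^ k of the starting tuples.\<close>

primrec loc_equiv :: "('v, 'l) lgraph \<Rightarrow> 'v set \<Rightarrow> nat \<Rightarrow> 'v list \<Rightarrow> 'v list \<Rightarrow> bool" where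
  "loc_equiv G S 0 cs ds \<longleftrightarrow> atomic_type G S cs = atomic_type G S ds"
| "loc_equiv G S (Suc k) cs ds \<longleftrightarrow> loc_equiv G S k cs ds \<and>
     (\<forall>x \<in> near_set G S (2 ^ k) cs. \<exists>y \<in> near_set G S (2 ^ k) ds. loc_equiv G S k (cs @ [x]) (ds @ [y])) \<and>
     (\<forall>y \<in> near_set G S (2 ^ k) ds. \<exists>x \<in> near_set G S (2 ^ k) cs. loc_equiv G S k (cs @ [x]) (ds @ [y]))"

lemma loc_equiv_atomic_type: "loc_equiv G S k cs ds \<Longrightarrow> atomic_type G S cs = atomic_type G S ds"
  by (induction k) auto

lemma loc_equiv_refl: "loc_equiv G S k cs cs"
  by (induction k arbitrary: cs) auto

lemma loc_equiv_sym: "loc_equiv G S k cs ds \<Longrightarrow> loc_equiv G S k ds cs"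
proof (induction k arbitrary: cs ds)
  case 0
  then show ?case by simp
next
  case (Suc k)
  then show ?case by simp blast
qed

lemma loc_equiv_trans: "loc_equiv G S k cs ds \<Longrightarrow> loc_equiv G S k ds es \<Longrightarrow> loc_equiv G S k cs es"
proof (induction k arbitrary: cs ds es)
  case 0
  then show ?case by simp
next
  case (Suc k)
  let ?N = "near_set G S (2 ^ k)"
  have forth_move: "\<exists>z \<in> ?N es. loc_equiv G S k (cs @ [x]) (es @ [z])" if x_near: "x \<in> ?N cs" for x
  proof -
    obtain y where y: "y \<in> ?N ds" "loc_equiv G S k (cs @ [x]) (ds @ [y])"
      using x_near Suc.prems(1) by auto
    moreover obtain z where "z \<in> ?N es" "loc_equiv G S k (ds @ [y]) (es @ [z])"
      using y(1) Suc.prems(2) by auto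
    ultimately show ?thesis using Suc.IH by blast
  qed
  have back_move: "\<exists>x \<in> ?N cs. loc_equiv G S k (cs @ [x]) (es @ [z])" if z_near: "z \<in> ?N es" for z
  proof -
    obtain y where y: "y \<in> ?N ds" "loc_equiv G S k (ds @ [y]) (es @ [z])"
      using z_near Suc.prems(2) by auto
    moreover obtain x where "x \<in> ?N cs" "loc_equiv G S k (cs @ [x]) (ds @ [y])"
      using y(1) Suc.prems(1) by auto
    ultimately show ?thesis using Suc.IH by blast
  qed
  show ?case
    using forth_move back_move Suc.prems Suc.IH[of cs ds es] by simp
qed

definition loc_class :: "('v, 'l) lgraph \<Rightarrow> 'v set \<Rightarrow> nat \<Rightarrow> 'v list \<Rightarrow> 'v list set" where
  "loc_class G S k cs = {ds. loc_equiv G S k cs ds}"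

lemma loc_class_eq_iff: "loc_class G S k cs = loc_class G S k ds \<longleftrightarrow> loc_equiv G S k cs ds"
  unfolding loc_class_def using loc_equiv_refl loc_equiv_sym loc_equiv_trans by blast

lemma loc_equiv_SucI:
  assumes "loc_class G S k cs = loc_class G S k ds"
    and "loc_class G S k ` (\<lambda>x. cs @ [x]) ` near_set G S (2 ^ k) cs =
         loc_class G S k ` (\<lambda>y. ds @ [y]) ` near_set G S (2 ^ k) ds"
  shows "loc_equiv G S (Suc k) cs ds"
proof -
  have "\<exists>y \<in> near_set G S (2 ^ k) ds. loc_equiv G S k (cs @ [x]) (ds @ [y])"
    if "x \<in> near_set G S (2 ^ k) cs" for x
  proof -
    have "loc_class G S k (cs @ [x]) \<in> loc_class G S k ` (\<lambda>y. ds @ [y]) ` near_set G S (2 ^ k) ds"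
      using that assms(2) by blast
    then show ?thesis by (auto simp: loc_class_eq_iff)
  qed
  moreover have "\<exists>x \<in> near_set G S (2 ^ k) cs. loc_equiv G S k (cs @ [x]) (ds @ [y])"
    if "y \<in> near_set G S (2 ^ k) ds" for y
  proof -
    have "loc_class G S k (ds @ [y]) \<in> loc_class G S k ` (\<lambda>x. cs @ [x]) ` near_set G S (2 ^ k) cs"
      using that assms(2) by blast
    then obtain x where "x \<in> near_set G S (2 ^ k) cs" "loc_equiv G S k (ds @ [y]) (cs @ [x])"
      by (auto simp: loc_class_eq_iff)
    then show ?thesis using loc_equiv_sym by blast
  qed
  ultimately show ?thesis
    using assms(1) by (simp add: loc_class_eq_iff)
qed

section \<open>Finitely many local types\<close>

definition tuples :: "('v, 'l) lgraph \<Rightarrow> nat \<Rightarrow> 'v list set" where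
  "tuples G n = {cs. set cs \<subseteq> verts G \<and> length cs = n}"

lemma finite_tuples: "finite (verts G) \<Longrightarrow> finite (tuples G n)"
  unfolding tuples_def by (rule finite_lists_length_eq)

definition atom_universe :: "nat \<Rightarrow> 'v set \<Rightarrow> ('v, 'l) atom set" where
  "atom_universe n S =
     (\<lambda>(i, j). Same i j) ` ({..<n} \<times> {..<n}) \<union> (\<lambda>(i, j). Edge i j) ` ({..<n} \<times> {..<n})
     \<union> (\<lambda>(a, i). Label a i) ` (UNIV \<times> {..<n}) \<union> (\<lambda>(s, i). Edge_to s i) ` (S \<times> {..<n})"

lemma atomic_type_subset_universe: "length cs = n \<Longrightarrow> atomic_type G S cs \<subseteq> atom_universe n S"
  unfolding atomic_type_def atom_universe_def by force

lemma finite_atom_universe: "finite S \<Longrightarrow> finite (atom_universe n S :: ('v, 'l::finite) atom set)"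
  unfolding atom_universe_def by simp

lemma card_atom_universe_le:
  assumes "finite S"
  shows "card (atom_universe n S :: ('v, 'l::finite) atom set) \<le> 2 * n * n + card (UNIV :: 'l set) * n + card S * n"
proof -
  have "card (atom_universe n S :: ('v, 'l) atom set)
      \<le> card ({..<n} \<times> {..<n}) + card ({..<n} \<times> {..<n}) + card ((UNIV :: 'l set) \<times> {..<n}) + card (S \<times> {..<n})"
    unfolding atom_universe_def
    by (intro card_Un_le[THEN order_trans] add_mono card_image_le finite_cartesian_product)
      (simp_all add: assms)
  then show ?thesis by (simp add: card_cartesian_product)
qed

lemma card_image_le_if_factors:
  assumes "finite A" and "\<And>x y. x \<in> A \<Longrightarrow> y \<in> A \<Longrightarrow> f x = f y \<Longrightarrow> h x = h y"
  shows "card (h ` A) \<le> card (f ` A)"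
proof -
  have "h ` A \<subseteq> (h \<circ> inv_into A f) ` f ` A"
  proof
    fix z assume "z \<in> h ` A"
    then obtain x where x: "x \<in> A" "z = h x" by blast
    have "h (inv_into A f (f x)) = h x"
      using assms(2)[OF inv_into_into[of "f x" f A] x(1)] x(1) by (simp add: f_inv_into_f)
    then show "z \<in> (h \<circ> inv_into A f) ` f ` A" using x by force
  qed
  then have "card (h ` A) \<le> card ((h \<circ> inv_into A f) ` f ` A)"
    using assms(1) by (intro card_mono) auto
  also have "\<dots> \<le> card (f ` A)"
    using assms(1) by (intro card_image_le) auto
  finally show ?thesis .
qed

lemma card_loc_class_0_le:
  fixes G :: "('v, 'l::finite) lgraph"
  assumes "finite (verts G)" and "finite S"
  shows "card (loc_class G S 0 ` tuples G n) \<le> 2 ^ (2 * n * n + card (UNIV :: 'l set) * n + card S * n)"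
proof -
  have "card (loc_class G S 0 ` tuples G n) \<le> card (atomic_type G S ` tuples G n)"
    by (rule card_image_le_if_factors) (simp_all add: finite_tuples assms loc_class_eq_iff)
  also have "\<dots> \<le> card (Pow (atom_universe n S :: ('v, 'l) atom set))"
  proof (rule card_mono)
    show "atomic_type G S ` tuples G n \<subseteq> Pow (atom_universe n S)"
      unfolding tuples_def using atomic_type_subset_universe by blast
  qed (simp add: finite_atom_universe assms)
  also have "\<dots> = 2 ^ card (atom_universe n S :: ('v, 'l) atom set)"
    by (simp add: card_Pow finite_atom_universe assms)
  also have "\<dots> \<le> 2 ^ (2 * n * n + card (UNIV :: 'l set) * n + card S * n)"
    using card_atom_universe_le[OF assms(2), of n, where 'l = 'l] by (intro power_increasing) simp_all
  finally show ?thesis .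
qed

lemma card_loc_class_Suc_le:
  assumes "finite (verts G)"
  shows "card (loc_class G S (Suc k) ` tuples G n)
    \<le> card (loc_class G S k ` tuples G n) * 2 ^ card (loc_class G S k ` tuples G (Suc n))"
proof -
  let ?C = "loc_class G S k"
  let ?signature = "\<lambda>cs. (?C cs, ?C ` (\<lambda>x. cs @ [x]) ` near_set G S (2 ^ k) cs)"
  have signature: "loc_class G S (Suc k) cs = loc_class G S (Suc k) ds"
    if "?signature cs = ?signature ds" for cs ds
    unfolding loc_class_eq_iff using that by (intro loc_equiv_SucI) simp_all
  have "card (loc_class G S (Suc k) ` tuples G n) \<le> card (?signature ` tuples G n)"
    by (rule card_image_le_if_factors[OF finite_tuples[OF assms]]) (rule signature, assumption)
  also have "\<dots> \<le> card (?C ` tuples G n \<times> Pow (?C ` tuples G (Suc n)))"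
  proof (rule card_mono)
    show "?signature ` tuples G n \<subseteq> ?C ` tuples G n \<times> Pow (?C ` tuples G (Suc n))"
    proof
      fix z assume "z \<in> ?signature ` tuples G n"
      then obtain cs where cs: "cs \<in> tuples G n" "z = ?signature cs" by blast
      have "(\<lambda>x. cs @ [x]) ` near_set G S (2 ^ k) cs \<subseteq> tuples G (Suc n)"
        using cs(1) by (auto simp: tuples_def near_set_def)
      then show "z \<in> ?C ` tuples G n \<times> Pow (?C ` tuples G (Suc n))"
        using cs by blast
    qed
  qed (simp add: finite_tuples assms)
  also have "\<dots> = card (?C ` tuples G n) * 2 ^ card (?C ` tuples G (Suc n))"
    by (simp add: card_cartesian_product card_Pow finite_tuples assms)
  finally show ?thesis .
qed

lemma loc_equiv_finite_index:
  "\<exists>b. \<forall>(G :: ('v, 'l::finite) lgraph) S. finite (verts G) \<longrightarrow> finite S \<longrightarrow> card S \<le> s \<longrightarrow>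
     card (loc_class G S k ` tuples G n) \<le> b"
proof (induction k arbitrary: n)
  case 0
  have "card (loc_class G S 0 ` tuples G n) \<le> 2 ^ (2 * n * n + card (UNIV :: 'l set) * n + s * n)"
    if "finite (verts G)" "finite S" "card S \<le> s" for G :: "('v, 'l) lgraph" and S
    using card_loc_class_0_le[OF that(1,2)] mult_le_mono1[OF that(3), of n]
    by (meson add_left_mono order_trans power_increasing one_le_numeral)
  then show ?case by blast
next
  case (Suc k)
  obtain b0 where b0: "\<forall>(G :: ('v, 'l) lgraph) S. finite (verts G) \<longrightarrow> finite S \<longrightarrow> card S \<le> s \<longrightarrow>
      card (loc_class G S k ` tuples G n) \<le> b0"
    using Suc.IH[of n] ..
  obtain b1 where b1: "\<forall>(G :: ('v, 'l) lgraph) S. finite (verts G) \<longrightarrow> finite S \<longrightarrow> card S \<le> s \<longrightarrow>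
      card (loc_class G S k ` tuples G (Suc n)) \<le> b1"
    using Suc.IH[of "Suc n"] ..
  have "card (loc_class G S (Suc k) ` tuples G n) \<le> b0 * 2 ^ b1"
    if "finite (verts G)" "finite S" "card S \<le> s" for G :: "('v, 'l) lgraph" and S
    using card_loc_class_Suc_le[OF that(1), of S k n] b0[rule_format, OF that] b1[rule_format, OF that]
    by (meson le_trans mult_le_mono power_increasing one_le_numeral)
  then show ?case by blast
qed

section \<open>The swapping game\<close>

definition iso_rel :: "('v, 'l) lgraph \<Rightarrow> ('v \<times> 'v) set \<Rightarrow> bool" where
  "iso_rel G R \<longleftrightarrow> (\<forall>(a, b) \<in> R. a \<in> verts G \<and> b \<in> verts G \<and> (\<forall>l. labs G l a \<longleftrightarrow> labs G l b) \<and>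
     (\<forall>(c, d) \<in> R. (a = c \<longleftrightarrow> b = d) \<and> (adjs G a c \<longleftrightarrow> adjs G b d)))"

lemma iso_relD:
  assumes "iso_rel G R" and "(a, b) \<in> R" and "(c, d) \<in> R"
  shows "a \<in> verts G" and "b \<in> verts G" and "labs G l a \<longleftrightarrow> labs G l b"
    and "a = c \<longleftrightarrow> b = d" and "adjs G a c \<longleftrightarrow> adjs G b d"
  using assms unfolding iso_rel_def by fast+

lemma iso_rel_subset: "iso_rel G R \<Longrightarrow> R' \<subseteq> R \<Longrightarrow> iso_rel G R'"
  unfolding iso_rel_def by (simp add: Ball_def subset_iff split_def) fast

text \<open>Answering x by y also answers y by x, so forth moves suffice.\<close>

primrec swap_game :: "('v, 'l) lgraph \<Rightarrow> nat \<Rightarrow> ('v \<times> 'v) set \<Rightarrow> bool" where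
  "swap_game G 0 R \<longleftrightarrow> iso_rel G R"
| "swap_game G (Suc k) R \<longleftrightarrow> iso_rel G R \<and>
     (\<forall>x \<in> verts G. \<exists>y \<in> verts G. swap_game G k (insert (x, y) (insert (y, x) R)))"

lemma swap_game_iso_rel: "swap_game G k R \<Longrightarrow> iso_rel G R"
  by (cases k) simp_all

lemma swap_game_subset: "swap_game G k R \<Longrightarrow> R' \<subseteq> R \<Longrightarrow> swap_game G k R'"
proof (induction k arbitrary: R R')
  case 0
  then show ?case using iso_rel_subset by simp
next
  case (Suc k)
  have "\<exists>y \<in> verts G. swap_game G k (insert (x, y) (insert (y, x) R'))" if x: "x \<in> verts G" for x
  proof -
    obtain y where "y \<in> verts G" "swap_game G k (insert (x, y) (insert (y, x) R))"
      using Suc.prems(1) x by auto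
    moreover have "insert (x, y) (insert (y, x) R') \<subseteq> insert (x, y) (insert (y, x) R)"
      using Suc.prems(2) by blast
    ultimately show ?thesis using Suc.IH by blast
  qed
  then show ?case
    using Suc.prems iso_rel_subset[of G R R'] by simp
qed

primrec qdepth :: "'l fo \<Rightarrow> nat" where
  "qdepth (FEq x y) = 0"
| "qdepth (FAdj x y) = 0"
| "qdepth (FLab a x) = 0"
| "qdepth (FNeg \<phi>) = qdepth \<phi>"
| "qdepth (FAnd \<phi> \<chi>) = max (qdepth \<phi>) (qdepth \<chi>)"
| "qdepth (FEx x \<phi>) = Suc (qdepth \<phi>)"

lemma swap_game_sat_iff:
  assumes "swap_game G k R" and "qdepth \<phi> \<le> k" and "\<And>z. z \<in> fvars \<phi> \<Longrightarrow> (\<sigma> z, \<tau> z) \<in> R"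
  shows "sat G \<phi> \<sigma> \<longleftrightarrow> sat G \<phi> \<tau>"
  using assms
proof (induction \<phi> arbitrary: k R \<sigma> \<tau>)
  case (FEq x y)
  then show ?case
    using iso_relD(4)[OF swap_game_iso_rel[OF FEq.prems(1)], of "\<sigma> x" "\<tau> x" "\<sigma> y" "\<tau> y"] by simp
next
  case (FAdj x y)
  then show ?case
    using iso_relD(5)[OF swap_game_iso_rel[OF FAdj.prems(1)], of "\<sigma> x" "\<tau> x" "\<sigma> y" "\<tau> y"] by simp
next
  case (FLab a x)
  then show ?case
    using iso_relD(3)[OF swap_game_iso_rel[OF FLab.prems(1)], of "\<sigma> x" "\<tau> x"] by simp
next
  case (FNeg \<phi>)
  then show ?case by simp
next
  case (FAnd \<phi> \<chi>)
  have "sat G \<phi> \<sigma> \<longleftrightarrow> sat G \<phi> \<tau>" and "sat G \<chi> \<sigma> \<longleftrightarrow> sat G \<chi> \<tau>"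
    using FAnd.IH[OF FAnd.prems(1)] FAnd.prems(2,3) by auto
  then show ?case by simp
next
  case (FEx x \<phi>)
  then obtain k' where k: "k = Suc k'" and depth: "qdepth \<phi> \<le> k'"
    by (cases k) auto
  have answer: "\<exists>b \<in> verts G. swap_game G k' (insert (a, b) (insert (b, a) R))" if "a \<in> verts G" for a
    using FEx.prems(1) that k by simp
  have pairs: "\<And>z. z \<in> fvars \<phi> \<Longrightarrow> ((\<sigma>(x := a)) z, (\<tau>(x := b)) z) \<in> insert (a, b) (insert (b, a) R)"
    for a b
    using FEx.prems(3) by auto
  show ?case
  proof
    assume "sat G (FEx x \<phi>) \<sigma>"
    then obtain a where a: "a \<in> verts G" "sat G \<phi> (\<sigma>(x := a))" by auto
    then obtain b where b: "b \<in> verts G" "swap_game G k' (insert (a, b) (insert (b, a) R))"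
      using answer by blast
    have "sat G \<phi> (\<tau>(x := b))"
      using a(2) FEx.IH[OF b(2) depth, where \<sigma> = "\<sigma>(x := a)" and \<tau> = "\<tau>(x := b)"] pairs by blast
    then show "sat G (FEx x \<phi>) \<tau>" using b(1) by auto
  next
    assume "sat G (FEx x \<phi>) \<tau>"
    then obtain b where b: "b \<in> verts G" "sat G \<phi> (\<tau>(x := b))" by auto
    then obtain a where a: "a \<in> verts G" "swap_game G k' (insert (a, b) (insert (b, a) R))"
      using answer[OF b(1)] by (metis insert_commute)
    have "sat G \<phi> (\<sigma>(x := a))"
      using b(2) FEx.IH[OF a(2) depth, where \<sigma> = "\<sigma>(x := a)" and \<tau> = "\<tau>(x := b)"] pairs by blast
    then show "sat G (FEx x \<phi>) \<sigma>" using a(1) by auto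
  qed
qed

lemma swap_game_sat_env2_iff:
  assumes "swap_game G k R" and "qdepth \<psi> \<le> k" and "fvars \<psi> \<subseteq> {0, 1}"
    and "(a, a') \<in> R" and "(b, b') \<in> R"
  shows "sat G \<psi> (env2 a b) \<longleftrightarrow> sat G \<psi> (env2 a' b')"
  using assms by (intro swap_game_sat_iff[OF assms(1,2)]) (auto simp: env2_def)

lemma Dset_interp:
  assumes "a \<in> verts G" and "b \<in> verts G"
  shows "Dset (interp \<psi> G) a b = {w \<in> verts G. sat G \<psi> (env2 a w) \<noteq> sat G \<psi> (env2 b w)}"
  using assms by (auto simp: Dset_def nbh_def interp_def)

lemma swap_answer_in_Dset:
  assumes "swap_game G k (insert (v, w) (insert (w, v) R))" and "qdepth \<psi> \<le> k" and "fvars \<psi> \<subseteq> {0, 1}"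
    and "(a, b) \<in> R" and "v \<in> Dset (interp \<psi> G) a b" and "w \<in> verts G"
  shows "w \<in> Dset (interp \<psi> G) a b"
proof -
  let ?R = "insert (v, w) (insert (w, v) R)"
  have pairs: "(a, b) \<in> ?R" "(v, w) \<in> ?R" "(w, v) \<in> ?R"
    using assms(4) by simp_all
  have ab: "a \<in> verts G" "b \<in> verts G"
    using iso_relD(1,2)[OF swap_game_iso_rel[OF assms(1)] pairs(1) pairs(1)] .
  have "sat G \<psi> (env2 a v) \<longleftrightarrow> sat G \<psi> (env2 b w)"
    using swap_game_sat_env2_iff[OF assms(1-3) pairs(1,2)] .
  moreover have "sat G \<psi> (env2 a w) \<longleftrightarrow> sat G \<psi> (env2 b v)"
    using swap_game_sat_env2_iff[OF assms(1-3) pairs(1,3)] .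
  ultimately show ?thesis
    using assms(5,6) unfolding Dset_interp[OF ab] by simp
qed

lemma swap_game_dgame:
  assumes "fvars \<psi> \<subseteq> {0, 1}"
  shows "swap_game G (qdepth \<psi> + m) R \<Longrightarrow> list_all2 (\<lambda>a b. (a, b) \<in> R) as bs \<Longrightarrow>
    dgame (interp \<psi> G) m as bs"
proof (induction m arbitrary: R as bs)
  case 0
  have R: "(as ! i, bs ! i) \<in> R" if "i < length as" for i
    using list_all2_nthD[OF "0.prems"(2) that] .
  have iso: "iso_rel G R"
    using "0.prems"(1) swap_game_iso_rel by blast
  have "sat G \<psi> (env2 (as ! i) (as ! j)) \<longleftrightarrow> sat G \<psi> (env2 (bs ! i) (bs ! j))"
    if "i < length as" "j < length as" for i j
    using swap_game_sat_env2_iff[OF "0.prems"(1) _ assms R R] that by simp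
  then show ?case
    using list_all2_lengthD[OF "0.prems"(2)] iso_relD(1,2,4)[OF iso R R]
    by (auto simp: partial_iso_def interp_def)
next
  case (Suc m)
  let ?H = "interp \<psi> G"
  have moves: "(\<exists>w \<in> Dset ?H (as ! i) (bs ! i). dgame ?H m (as @ [v]) (bs @ [w])) \<and>
      (\<exists>w \<in> Dset ?H (as ! i) (bs ! i). dgame ?H m (as @ [w]) (bs @ [v]))"
    if i: "i < length as" and v: "v \<in> Dset ?H (as ! i) (bs ! i)" for i v
  proof -
    have "v \<in> verts G"
      using v by (auto simp: Dset_def nbh_def interp_def)
    then obtain w where w: "w \<in> verts G" and game: "swap_game G (qdepth \<psi> + m) (insert (v, w) (insert (w, v) R))"
      using Suc.prems(1) by auto
    have "w \<in> Dset ?H (as ! i) (bs ! i)"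
      using swap_answer_in_Dset[OF game _ assms list_all2_nthD[OF Suc.prems(2) i] v w] by simp
    moreover have "list_all2 (\<lambda>a b. (a, b) \<in> insert (v, w) (insert (w, v) R)) (as @ [v]) (bs @ [w])"
      and "list_all2 (\<lambda>a b. (a, b) \<in> insert (v, w) (insert (w, v) R)) (as @ [w]) (bs @ [v])"
      using Suc.prems(2) by (auto intro!: list_all2_appendI elim: list_all2_mono)
    ultimately show ?thesis
      using Suc.IH[OF game] by blast
  qed
  then show ?case by simp
qed

section \<open>Swapping strategies for far configurations\<close>

definition swap_rel :: "'v list \<Rightarrow> 'v list \<Rightarrow> 'v set \<Rightarrow> ('v \<times> 'v) set" where
  "swap_rel cs ds E = set (zip cs ds) \<union> set (zip ds cs) \<union> Id_on E"

lemma swap_rel_commute: "swap_rel ds cs E = swap_rel cs ds E"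
  unfolding swap_rel_def by blast

lemma swap_rel_snoc:
  "length cs = length ds \<Longrightarrow>
    swap_rel (cs @ [x]) (ds @ [y]) E = insert (x, y) (insert (y, x) (swap_rel cs ds E))"
  unfolding swap_rel_def by auto

lemma swap_rel_insert: "swap_rel cs ds (insert x E) = insert (x, x) (swap_rel cs ds E)"
  unfolding swap_rel_def by auto

lemma iso_rel_zip:
  assumes "atomic_type G S cs = atomic_type G S ds" and "set cs \<union> set ds \<subseteq> verts G"
    and "\<And>c d. c \<in> set cs \<Longrightarrow> d \<in> set ds \<Longrightarrow> c \<noteq> d \<and> \<not> adjs G c d \<and> \<not> adjs G d c"
  shows "iso_rel G (set (zip cs ds) \<union> set (zip ds cs))"
proof -
  have len: "length ds = length cs"
    using atomic_type_eq_length[OF assms(1)] by simp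
  have same: "(cs ! i = cs ! j \<longleftrightarrow> ds ! i = ds ! j) \<and> (adjs G (cs ! i) (cs ! j) \<longleftrightarrow> adjs G (ds ! i) (ds ! j))
      \<and> (labs G l (cs ! i) \<longleftrightarrow> labs G l (ds ! i))"
    if "i < length cs" "j < length cs" for i j l
    using atomic_type_eqD[OF assms(1) that] by blast
  have cross: "cs ! i \<noteq> ds ! j \<and> ds ! j \<noteq> cs ! i \<and> \<not> adjs G (cs ! i) (ds ! j) \<and> \<not> adjs G (ds ! j) (cs ! i)"
    if "i < length cs" "j < length cs" for i j
    using assms(3)[of "cs ! i" "ds ! j"] that len by auto
  have verts: "cs ! i \<in> verts G" "ds ! i \<in> verts G" if "i < length cs" for i
    using assms(2) that len by auto
  show ?thesis
    unfolding iso_rel_def set_zip len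
    using same cross verts by auto
qed

lemma iso_rel_Un_Id_on:
  assumes "iso_rel G Q" and "E \<subseteq> verts G"
    and "\<And>a b e. (a, b) \<in> Q \<Longrightarrow> e \<in> E \<Longrightarrow>
      (a = e \<longleftrightarrow> b = e) \<and> (adjs G a e \<longleftrightarrow> adjs G b e) \<and> (adjs G e a \<longleftrightarrow> adjs G e b)"
  shows "iso_rel G (Q \<union> Id_on E)"
  using assms unfolding iso_rel_def by (auto simp: Id_on_iff) blast+

text \<open>The two tuples being played around are locally equivalent and far apart; E collects the moves
answered by themselves, which lie in S or far from both tuples.\<close>

definition far_config :: "('v, 'l) lgraph \<Rightarrow> 'v set \<Rightarrow> nat \<Rightarrow> 'v list \<Rightarrow> 'v list \<Rightarrow> 'v set \<Rightarrow> bool" where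
  "far_config G S k cs ds E \<longleftrightarrow> loc_equiv G S k cs ds \<and> set cs \<union> set ds \<subseteq> verts G - S \<and> E \<subseteq> verts G \<and>
     (\<forall>c \<in> set cs. \<forall>d \<in> set ds. \<not> near G S (2 ^ (k + 2)) c d) \<and>
     (\<forall>e \<in> E - S. \<forall>c \<in> set cs \<union> set ds. \<not> near G S (2 ^ k) c e)"

lemma far_config_commute:
  assumes wf: "wf_lgraph G" and conf: "far_config G S k cs ds E"
  shows "far_config G S k ds cs E"
proof -
  have V: "set cs \<union> set ds \<subseteq> verts G - S"
    using conf unfolding far_config_def by blast
  have "\<not> near G S (2 ^ (k + 2)) d c" if "d \<in> set ds" "c \<in> set cs" for c d
  proof
    assume "near G S (2 ^ (k + 2)) d c"
    then have "near G S (2 ^ (k + 2)) c d"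
      using near_sym[OF wf] that V by blast
    then show False
      using conf that unfolding far_config_def by blast
  qed
  moreover have "loc_equiv G S k ds cs"
    using conf loc_equiv_sym unfolding far_config_def by blast
  ultimately show ?thesis
    using conf unfolding far_config_def by (simp add: Un_commute)
qed

lemma far_config_fixed_point:
  assumes conf: "far_config G S k cs ds E"
    and ab: "(a, b) \<in> set (zip cs ds) \<union> set (zip ds cs)" and e: "e \<in> E"
  shows "(a = e \<longleftrightarrow> b = e) \<and> (adjs G a e \<longleftrightarrow> adjs G b e)"
proof -
  have V: "set cs \<union> set ds \<subseteq> verts G - S"
    using conf unfolding far_config_def by blast
  have ab_in: "a \<in> set cs \<union> set ds" "b \<in> set cs \<union> set ds"
    using ab set_zip_leftD set_zip_rightD by fastforce+
  show ?thesis
  proof (cases "e \<in> S")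
    case True
    have type: "atomic_type G S cs = atomic_type G S ds"
      using conf loc_equiv_atomic_type unfolding far_config_def by blast
    have "adjs G c e \<longleftrightarrow> adjs G d e" if "(c, d) \<in> set (zip cs ds)" for c d
      using that atomic_type_eqD(4)[OF type _ _ True] by (auto simp: in_set_zip)
    moreover have "(a, b) \<in> set (zip cs ds) \<or> (b, a) \<in> set (zip cs ds)"
      using ab by (auto simp: in_set_zip)
    ultimately show ?thesis
      using True ab_in V by blast
  next
    case False
    have "c \<noteq> e \<and> \<not> adjs G c e" if c: "c \<in> set cs \<union> set ds" for c
    proof (rule not_near_distinct_nonadj)
      show "\<not> near G S (2 ^ k) c e"
        using conf c e False unfolding far_config_def by blast
    qed (use c V False in auto)
    then show ?thesis
      using ab_in by blast
  qed
qed

lemma far_config_iso_rel: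
  assumes wf: "wf_lgraph G" and conf: "far_config G S k cs ds E"
  shows "iso_rel G (swap_rel cs ds E)"
proof -
  have type: "atomic_type G S cs = atomic_type G S ds"
    using conf loc_equiv_atomic_type unfolding far_config_def by blast
  have V: "set cs \<union> set ds \<subseteq> verts G - S" and E: "E \<subseteq> verts G"
    using conf unfolding far_config_def by blast+
  have adj_sym: "adjs G a b \<longleftrightarrow> adjs G b a" for a b
    using wf unfolding wf_lgraph_def by blast
  have "c \<noteq> d \<and> \<not> adjs G c d" if "c \<in> set cs" "d \<in> set ds" for c d
  proof (rule not_near_distinct_nonadj)
    show "\<not> near G S (2 ^ (k + 2)) c d"
      using conf that unfolding far_config_def by blast
  qed (use that V in auto)
  then have zip: "iso_rel G (set (zip cs ds) \<union> set (zip ds cs))"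
    using type V adj_sym by (intro iso_rel_zip) auto
  show ?thesis
    unfolding swap_rel_def
    using iso_rel_Un_Id_on[OF zip E] far_config_fixed_point[OF conf] adj_sym by blast
qed

lemma near_snoc_witness:
  "c0 \<in> set cs \<Longrightarrow> near G S r c0 x \<Longrightarrow> c \<in> set (cs @ [x]) \<Longrightarrow> \<exists>c' \<in> set cs. near G S r c' c"
  using near_refl[of G S r c] by auto

lemma far_config_snoc:
  assumes wf: "wf_lgraph G" and conf: "far_config G S (Suc k) cs ds E"
    and x: "x \<in> near_set G S (2 ^ k) cs"
  shows "\<exists>y. far_config G S k (cs @ [x]) (ds @ [y]) E"
proof -
  have V: "set cs \<union> set ds \<subseteq> verts G - S" and E: "E \<subseteq> verts G"
    and far: "\<And>c d. c \<in> set cs \<Longrightarrow> d \<in> set ds \<Longrightarrow> \<not> near G S (2 ^ (k + 3)) c d"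
    and E_far: "\<And>e c. e \<in> E - S \<Longrightarrow> c \<in> set cs \<union> set ds \<Longrightarrow> \<not> near G S (2 ^ Suc k) c e"
    using conf unfolding far_config_def by (simp_all add: numeral_3_eq_3)
  obtain y where y: "y \<in> near_set G S (2 ^ k) ds" and equiv: "loc_equiv G S k (cs @ [x]) (ds @ [y])"
    using conf x unfolding far_config_def by auto
  obtain c0 where c0: "c0 \<in> set cs" "near G S (2 ^ k) c0 x" and xV: "x \<in> verts G - S"
    using x unfolding near_set_def by blast
  obtain d0 where d0: "d0 \<in> set ds" "near G S (2 ^ k) d0 y" and yV: "y \<in> verts G - S"
    using y unfolding near_set_def by blast
  note from_cs = near_snoc_witness[OF c0] and from_ds = near_snoc_witness[OF d0]
  have "\<not> near G S (2 ^ (k + 2)) c d" if c: "c \<in> set (cs @ [x])" and d: "d \<in> set (ds @ [y])" for c d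
  proof
    assume near: "near G S (2 ^ (k + 2)) c d"
    obtain c' where c': "c' \<in> set cs" "near G S (2 ^ k) c' c" using from_cs[OF c] ..
    obtain d' where d': "d' \<in> set ds" "near G S (2 ^ k) d' d" using from_ds[OF d] ..
    have "near G S (2 ^ k) d d'"
      using near_sym[OF wf _ _ d'(2)] d d'(1) V yV by auto
    then have "near G S (2 ^ k + 2 ^ (k + 2) + 2 ^ k) c' d'"
      using near_trans[OF near_trans[OF c'(2) near]] by blast
    then have "near G S (2 ^ (k + 3)) c' d'"
      by (rule near_mono) (simp add: numeral_3_eq_3)
    then show False using far c'(1) d'(1) by blast
  qed
  moreover have "\<not> near G S (2 ^ k) c e" if e: "e \<in> E - S" and c: "c \<in> set (cs @ [x]) \<union> set (ds @ [y])" for c e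
  proof
    assume near: "near G S (2 ^ k) c e"
    obtain c' where "c' \<in> set cs \<union> set ds" "near G S (2 ^ k) c' c"
      using from_cs from_ds c by blast
    with near have "near G S (2 ^ Suc k) c' e"
      using near_trans[of G S "2 ^ k" c' c "2 ^ k" e] by (simp add: mult_2)
    then show False using E_far e \<open>c' \<in> set cs \<union> set ds\<close> by blast
  qed
  ultimately have "far_config G S k (cs @ [x]) (ds @ [y]) E"
    using equiv V E xV yV unfolding far_config_def by auto
  then show ?thesis ..
qed

lemma far_config_insert:
  assumes conf: "far_config G S (Suc k) cs ds E" and x: "x \<in> verts G"
    and not_near: "x \<notin> near_set G S (2 ^ k) cs" "x \<notin> near_set G S (2 ^ k) ds"
  shows "far_config G S k cs ds (insert x E)"
proof -
  have "\<not> near G S (2 ^ (k + 2)) c d" if "c \<in> set cs" "d \<in> set ds" for c d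
    using conf that near_mono[of G S "2 ^ (k + 2)" c d "2 ^ (Suc k + 2)"] unfolding far_config_def by auto
  moreover have "\<not> near G S (2 ^ k) c e" if "e \<in> E - S" "c \<in> set cs \<union> set ds" for c e
    using conf that near_mono[of G S "2 ^ k" c e "2 ^ Suc k"] unfolding far_config_def by auto
  moreover have "\<not> near G S (2 ^ k) c x" if "x \<notin> S" "c \<in> set cs \<union> set ds" for c
    using not_near that x unfolding near_set_def by auto
  ultimately show ?thesis
    using conf x unfolding far_config_def by auto
qed

lemma far_config_step:
  assumes wf: "wf_lgraph G" and conf: "far_config G S (Suc k) cs ds E" and x: "x \<in> verts G"
  obtains y cs' ds' E' where "y \<in> verts G" and "far_config G S k cs' ds' E'"
    and "insert (x, y) (insert (y, x) (swap_rel cs ds E)) \<subseteq> swap_rel cs' ds' E'"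
proof -
  have len: "length cs = length ds"
    using conf atomic_type_eq_length loc_equiv_atomic_type unfolding far_config_def by blast
  consider "x \<in> near_set G S (2 ^ k) cs" | "x \<in> near_set G S (2 ^ k) ds"
    | "x \<notin> near_set G S (2 ^ k) cs" "x \<notin> near_set G S (2 ^ k) ds"
    by blast
  then show ?thesis
  proof cases
    case 1
    then obtain y where y: "far_config G S k (cs @ [x]) (ds @ [y]) E"
      using far_config_snoc[OF wf conf] by blast
    moreover have "y \<in> verts G"
      using y unfolding far_config_def by auto
    moreover have "swap_rel (cs @ [x]) (ds @ [y]) E = insert (x, y) (insert (y, x) (swap_rel cs ds E))"
      using swap_rel_snoc[OF len] .
    ultimately show ?thesis
      using that by blast
  next
    case 2
    then obtain y where y: "far_config G S k (ds @ [x]) (cs @ [y]) E"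
      using far_config_snoc[OF wf far_config_commute[OF wf conf]] by blast
    moreover have "y \<in> verts G"
      using y unfolding far_config_def by auto
    moreover have "swap_rel (ds @ [x]) (cs @ [y]) E = insert (x, y) (insert (y, x) (swap_rel cs ds E))"
      using swap_rel_snoc[OF len[symmetric]] swap_rel_commute[of cs ds] by simp
    ultimately show ?thesis
      using that by blast
  next
    case 3
    then have "far_config G S k cs ds (insert x E)"
      using far_config_insert[OF conf x] by blast
    moreover have "insert (x, x) (insert (x, x) (swap_rel cs ds E)) \<subseteq> swap_rel cs ds (insert x E)"
      by (simp add: swap_rel_insert)
    ultimately show ?thesis
      using that x by blast
  qed
qed

lemma far_config_swap_game:
  "wf_lgraph G \<Longrightarrow> far_config G S k cs ds E \<Longrightarrow> swap_game G k (swap_rel cs ds E)"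
proof (induction k arbitrary: cs ds E)
  case 0
  then show ?case using far_config_iso_rel by simp
next
  case (Suc k)
  have "\<exists>y \<in> verts G. swap_game G k (insert (x, y) (insert (y, x) (swap_rel cs ds E)))"
    if x: "x \<in> verts G" for x
  proof -
    obtain y cs' ds' E' where y: "y \<in> verts G" and conf: "far_config G S k cs' ds' E'"
      and sub: "insert (x, y) (insert (y, x) (swap_rel cs ds E)) \<subseteq> swap_rel cs' ds' E'"
      using far_config_step[OF Suc.prems x] .
    have "swap_game G k (insert (x, y) (insert (y, x) (swap_rel cs ds E)))"
      using swap_game_subset[OF Suc.IH[OF Suc.prems(1) conf] sub] .
    then show ?thesis using y ..
  qed
  then show ?case
    using far_config_iso_rel[OF Suc.prems] by simp
qed

lemma far_loc_equiv_dcong: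
  assumes wf: "wf_lgraph G" and fv: "fvars \<psi> \<subseteq> {0, 1}"
    and uv: "u \<in> verts G - S" "v \<in> verts G - S"
    and far: "\<not> near G S (2 ^ (qdepth \<psi> + m + 2)) u v"
    and equiv: "loc_equiv G S (qdepth \<psi> + m) [u] [v]"
  shows "dcong (interp \<psi> G) m u v"
proof -
  have "far_config G S (qdepth \<psi> + m) [u] [v] {}"
    using uv far equiv unfolding far_config_def by simp
  then have "swap_game G (qdepth \<psi> + m) (swap_rel [u] [v] {})"
    using far_config_swap_game[OF wf] by blast
  moreover have "list_all2 (\<lambda>a b. (a, b) \<in> swap_rel [u] [v] {}) [u] [v]"
    by (simp add: swap_rel_def)
  ultimately show ?thesis
    unfolding dcong_def using swap_game_dgame[OF fv] by blast
qed

lemma far_indep_card_le: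
  assumes wf: "wf_lgraph G" and fv: "fvars \<psi> \<subseteq> {0, 1}"
    and indep: "dcong_indep (interp \<psi> G) m I"
    and A: "A \<subseteq> I - S" "finite A"
    and far: "\<And>u v. u \<in> A \<Longrightarrow> v \<in> A \<Longrightarrow> u \<noteq> v \<Longrightarrow> \<not> near G S (2 ^ (qdepth \<psi> + m + 2)) u v"
  shows "card A \<le> card (loc_class G S (qdepth \<psi> + m) ` tuples G 1)"
proof -
  let ?class = "\<lambda>u. loc_class G S (qdepth \<psi> + m) [u]"
  have I: "I \<subseteq> verts G"
    using indep unfolding dcong_indep_def interp_def by simp
  have "inj_on ?class A"
  proof (rule inj_onI, rule ccontr)
    fix u v assume uv: "u \<in> A" "v \<in> A" "?class u = ?class v" "u \<noteq> v"
    have "u \<in> verts G - S" "v \<in> verts G - S"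
      using uv(1,2) A(1) I by auto
    moreover have "loc_equiv G S (qdepth \<psi> + m) [u] [v]"
      using uv(3) loc_class_eq_iff by metis
    ultimately have "dcong (interp \<psi> G) m u v"
      using far_loc_equiv_dcong[OF wf fv _ _ far[OF uv(1,2,4)]] by blast
    then show False
      using indep uv A(1) unfolding dcong_indep_def by blast
  qed
  then have "card A = card (?class ` A)"
    by (simp add: card_image)
  also have "\<dots> \<le> card (loc_class G S (qdepth \<psi> + m) ` tuples G 1)"
  proof (rule card_mono)
    show "finite (loc_class G S (qdepth \<psi> + m) ` tuples G 1)"
      using wf finite_tuples unfolding wf_lgraph_def by blast
    show "?class ` A \<subseteq> loc_class G S (qdepth \<psi> + m) ` tuples G 1"
      using A(1) I unfolding tuples_def by auto
  qed
  finally show ?thesis .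
qed

theorem theorem6p8:
  fixes C :: "(nat, 'l::finite) lgraph set" and \<psi> :: "'l fo"
  assumes "\<forall>G \<in> C. wf_lgraph G"
    and "uniformly_quasi_wide C"
    and "interp_formula \<psi>"
  shows "\<forall>m::nat. \<exists>p::nat. \<forall>H \<in> interp \<psi> ` C. \<forall>I.
           dcong_indep H m I \<longrightarrow> card I \<le> p"
proof
  fix m
  let ?k = "qdepth \<psi> + m"
  have fv: "fvars \<psi> \<subseteq> {0, 1}"
    using assms(3) unfolding interp_formula_def by blast
  obtain N s where wide: "\<forall>n. \<forall>G \<in> C. \<forall>A. A \<subseteq> verts G \<and> card A \<ge> N n \<longrightarrow>
      (\<exists>S. S \<subseteq> verts G \<and> card S \<le> s \<and>
        (\<exists>B. B \<subseteq> A - S \<and> finite B \<and> card B = n \<and>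
          (\<forall>u \<in> B. \<forall>v \<in> B. u \<noteq> v \<longrightarrow> \<not> near G S (2 ^ (?k + 2)) u v)))"
    using assms(2)[unfolded uniformly_quasi_wide_def, THEN spec[of _ "2 ^ (?k + 2)"]]
    by (elim exE) (rule that, assumption)
  obtain b where classes: "\<forall>(G :: (nat, 'l) lgraph) S. finite (verts G) \<longrightarrow> finite S \<longrightarrow> card S \<le> s \<longrightarrow>
      card (loc_class G S ?k ` tuples G 1) \<le> b"
    using loc_equiv_finite_index ..
  have "card I \<le> N (Suc b)" if G: "G \<in> C" and indep: "dcong_indep (interp \<psi> G) m I" for G I
  proof (rule ccontr)
    assume "\<not> card I \<le> N (Suc b)"
    then have large: "N (Suc b) \<le> card I" by simp
    have wf: "wf_lgraph G" and I: "I \<subseteq> verts G"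
      using assms(1) G indep unfolding dcong_indep_def interp_def by auto
    obtain S B where S: "S \<subseteq> verts G" "card S \<le> s" and B: "B \<subseteq> I - S" "finite B" "card B = Suc b"
      and far: "\<forall>u \<in> B. \<forall>v \<in> B. u \<noteq> v \<longrightarrow> \<not> near G S (2 ^ (?k + 2)) u v"
      using wide[rule_format, OF G conjI[OF I large]] by blast
    have "finite (verts G)"
      using wf unfolding wf_lgraph_def by blast
    then have "card B \<le> b"
      using far_indep_card_le[OF wf fv indep B(1,2)] far classes S finite_subset[OF S(1)] by (meson order_trans)
    then show False using B(3) by simp
  qed
  then show "\<exists>p. \<forall>H \<in> interp \<psi> ` C. \<forall>I. dcong_indep H m I \<longrightarrow> card I \<le> p"
    by blast
qed

end
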